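(* Fix a real constant $c>-1$, let $\alpha\to\infty$ and put $\beta=\alpha-c$ (so that $\alpha>\beta-1>0$ for all sufficiently large $\alpha$). Then \[ \lim_{\alpha\to\infty}\alpha^{\frac{c+1}{2}}\,I(\alpha,\beta)=6^{\frac{c+1}{2}}\,\Gamma\!\left(\frac{c+1}{2}\right). \] In particular, \[ \lim_{\alpha\to\infty}\sqrt{\alpha}\,I(\alpha,\alpha)=\sqrt{6\pi}. \]
   Context: For real $\alpha,\beta$ with $\alpha>\beta-1>0$, $I(\alpha,\beta)=\int_{-\infty}^{\infty}|\sin t|^{\alpha}|t|^{-\beta}\,dt$; $\Gamma$ denotes the gamma function. *)

theory Defs
  imports "HOL-Analysis.Analysis"
begin

text \<open>I(alpha,beta) = integral over the real line of |sin t|^alpha |t|^(-beta)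
  (Lebesgue integral w.r.t. Lebesgue-Borel measure; the point t = 0 is a null set).\<close>
definition I_int :: "real \<Rightarrow> real \<Rightarrow> real" where
  "I_int \<alpha> \<beta> = (\<integral>t. \<bar>sin t\<bar> powr \<alpha> * \<bar>t\<bar> powr (- \<beta>) \<partial>lborel)"

end

theory Submission
  imports Defs "HOL-Real_Asymp.Real_Asymp"
begin

text \<open>Substituting \<open>t = s / sqrt \<alpha>\<close> turns \<open>\<alpha> powr ((c + 1) / 2) * I_int \<alpha> (\<alpha> - c)\<close>
  into the integral of \<open>(\<bar>sin u\<bar> / \<bar>u\<bar>) powr \<alpha> * \<bar>s\<bar> powr c\<close> with \<open>u = s / sqrt \<alpha>\<close>.
  As \<open>sin u / u = 1 - u\<^sup>2 / 6 + O(u\<^sup>4)\<close>, the first factor tends to \<open>exp (- s\<^sup>2 / 6)\<close>, and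
  the integral of \<open>exp (- s\<^sup>2 / 6) * \<bar>s\<bar> powr c\<close> is a Gamma integral. Dominated convergence
  applies because \<open>sin\<^sup>2 u * (1 + u\<^sup>2 / 4) \<le> u\<^sup>2\<close> bounds the first factor by
  \<open>(1 + s\<^sup>2 / (4 * \<alpha>)) powr (- \<alpha> / 2)\<close>, which decreases in \<open>\<alpha>\<close> and is integrable against
  \<open>\<bar>s\<bar> powr c\<close> once \<open>\<alpha> > c + 1\<close>.\<close>

lemma has_bochner_integral_Gamma_real:
  assumes "s > (0::real)"
  shows "has_bochner_integral lborel (\<lambda>t. indicator {0..} t * (t powr (s - 1) / exp t)) (Gamma s)"
  using assms Gamma_real_pos Gamma_conv_nn_integral_real[OF assms]
  by (intro has_bochner_integral_nn_integral) auto

lemma has_bochner_integral_sqrt_substitution: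
  fixes f :: "real \<Rightarrow> real" and b I :: real
  assumes b: "b > 0"
    and f: "\<And>x. x > 0 \<Longrightarrow> isCont f x" "\<And>x. x > 0 \<Longrightarrow> 0 \<le> f x"
    and I: "has_bochner_integral lborel
              (\<lambda>u. indicator {0<..} u * (f (sqrt (b * u)) * (b / (2 * sqrt (b * u))))) I"
  shows "has_bochner_integral lborel (\<lambda>x. indicator {0<..} x * f x) I"
proof -
  define g where "g u = sqrt (b * u)" for u
  define g' where "g' u = b / (2 * sqrt (b * u))" for u
  have halfline: "einterval 0 \<infinity> = ({0<..} :: real set)"
    by (auto simp: einterval_iff)
  have deriv: "DERIV g u :> g' u" if "0 < ereal u" for u
    using that b unfolding g_def g'_def
    by (auto intro!: derivative_eq_intros simp: field_simps real_sqrt_mult)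
  have cont: "isCont f (g u)" "isCont g' u" if "0 < ereal u" for u
    using that b f(1) unfolding g_def g'_def by (auto intro!: continuous_intros)
  have nonneg: "0 \<le> f (g u)" if "0 < ereal u" for u
    using that b f(2) by (simp add: g_def)
  have nonneg': "0 \<le> g' u" if "0 \<le> ereal u" for u
    using that b by (simp add: g'_def)
  have lim_0: "((ereal \<circ> g \<circ> real_of_ereal) \<longlongrightarrow> 0) (at_right 0)"
    unfolding zero_ereal_def ereal_tendsto_simps g_def by (auto intro!: tendsto_eq_intros)
  have lim_infinity: "((ereal \<circ> g \<circ> real_of_ereal) \<longlongrightarrow> \<infinity>) (at_left \<infinity>)"
    unfolding ereal_tendsto_simps g_def using b
    by (auto intro!: filterlim_compose[OF sqrt_at_top] filterlim_tendsto_pos_mult_at_top filterlim_ident)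
  have "set_integrable lborel (einterval 0 \<infinity>) (\<lambda>u. f (g u) * g' u)"
    using I unfolding set_integrable_def halfline g_def g'_def by (auto intro: integrable.intros)
  from interval_integral_substitution_nonneg[OF _ deriv cont nonneg nonneg' lim_0 lim_infinity this]
  have "set_integrable lborel {0<..} f" "(LBINT x:{0<..}. f x) = (LBINT u:{0<..}. f (g u) * g' u)"
    by (simp_all add: interval_lebesgue_integral_def halfline)
  then show ?thesis
    using I by (simp add: has_bochner_integral_iff set_integrable_def set_lebesgue_integral_def g_def g'_def)
qed

lemma has_bochner_integral_half_gaussian_powr:
  fixes b c :: real
  assumes b: "b > 0" and c: "c > -1"
  shows "has_bochner_integral lborel (\<lambda>x. indicator {0<..} x * (exp (-(x^2)/b) * x powr c))
           (b powr ((c+1)/2) * Gamma ((c+1)/2) / 2)"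
proof (rule has_bochner_integral_sqrt_substitution[OF b])
  define s where "s = (c+1)/2"
  have integrand: "indicator {0<..} u * (exp (- ((sqrt (b*u))^2) / b) * sqrt (b*u) powr c * (b / (2 * sqrt (b*u))))
      = b powr s / 2 * (indicator {0..} u * (u powr (s - 1) / exp u))" for u
  proof (cases "u > 0")
    case True
    then have bu: "b * u > 0"
      using b by simp
    have "exp (- ((sqrt (b*u))^2) / b) * sqrt (b*u) powr c * (b / (2 * sqrt (b*u)))
        = exp (-u) * (b/2) * (sqrt (b*u) powr c / sqrt (b*u))"
      using bu by simp
    also have "sqrt (b*u) powr c / sqrt (b*u) = (b*u) powr (c/2 - 1/2)"
      using bu by (simp add: powr_half_sqrt[symmetric] powr_powr powr_diff)
    also have "\<dots> = b powr (s - 1) * u powr (s - 1)"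
      using b True by (simp add: s_def powr_mult add_divide_distrib)
    also have "exp (-u) * (b/2) * (b powr (s - 1) * u powr (s - 1)) = b powr s / 2 * (u powr (s - 1) / exp u)"
      using b by (simp add: powr_diff exp_minus field_simps)
    finally show ?thesis
      using True by simp
  qed (auto simp: indicator_def)
  have "s > 0"
    using c by (simp add: s_def)
  from has_bochner_integral_mult_right[OF has_bochner_integral_Gamma_real[OF this], of "b powr s / 2"]
  show "has_bochner_integral lborel
          (\<lambda>u. indicator {0<..} u * (exp (- ((sqrt (b*u))^2) / b) * sqrt (b*u) powr c * (b / (2 * sqrt (b*u)))))
          (b powr ((c+1)/2) * Gamma ((c+1)/2) / 2)"
    unfolding integrand by (simp add: s_def mult.commute)
qed (use b in \<open>auto intro!: continuous_intros\<close>)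

lemma has_bochner_integral_gaussian_abs_powr:
  fixes b c :: real
  assumes "b > 0" "c > -1"
  shows "has_bochner_integral lborel (\<lambda>x. exp (-(x^2)/b) * \<bar>x\<bar> powr c)
           (b powr ((c+1)/2) * Gamma ((c+1)/2))"
proof -
  have "(\<lambda>x. indicator {0<..} x * (exp (-(x^2)/b) * x powr c)) =
        (\<lambda>x. indicator {0..} x *\<^sub>R (exp (-(x^2)/b) * \<bar>x\<bar> powr c))"
    by (auto simp: fun_eq_iff indicator_def)
  with has_bochner_integral_half_gaussian_powr[OF assms]
  have "has_bochner_integral lborel (\<lambda>x. indicator {0..} x *\<^sub>R (exp (-(x^2)/b) * \<bar>x\<bar> powr c))
          (b powr ((c+1)/2) * Gamma ((c+1)/2) / 2)"
    by simp
  from has_bochner_integral_even_function[OF this] show ?thesis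
    by simp
qed

lemma one_plus_square_div_powr_le:
  fixes b p x :: real
  assumes "b > 0" "p \<ge> 0" "x > 0"
  shows "(1 + x^2/b) powr (-p) \<le> b powr p / x powr (2*p)"
proof -
  have "(x^2) powr p = x powr (2*p)"
    using assms by (simp add: powr_def ln_realpow)
  then have "(x^2 / b) powr (-p) = b powr p / x powr (2*p)"
    using assms by (simp add: powr_divide powr_minus)
  moreover have "(1 + x^2/b) powr (-p) \<le> (x^2 / b) powr (-p)"
    using assms by (intro powr_mono2') auto
  ultimately show ?thesis
    by simp
qed

lemma one_plus_square_powr_mult_abs_powr_absolutely_integrable_on_halfline:
  fixes b c p :: real
  assumes b: "b > 0" and c: "c > -1" and p: "c + 1 < 2 * p"
  shows "(\<lambda>x. (1 + x^2/b) powr (-p) * \<bar>x\<bar> powr c) absolutely_integrable_on {0<..}"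
proof -
  define f where "f x = (1 + x^2/b) powr (-p) * \<bar>x\<bar> powr c" for x :: real
  have f_measurable: "(\<lambda>x. indicator A x *\<^sub>R f x) \<in> borel_measurable lebesgue"
    if "A \<in> sets borel" for A :: "real set"
    unfolding f_def using that
    by (intro measurable_completion borel_measurable_scaleR borel_measurable_indicator) (simp_all, measurable)
  have "f absolutely_integrable_on {0<..1}"
    unfolding set_integrable_def
  proof (rule Bochner_Integration.integrable_bound[OF _ f_measurable AE_I2])
    show "integrable lebesgue (\<lambda>x. indicator {0<..1} x *\<^sub>R x powr c)"
      using c by (intro nonnegative_absolutely_integrable_1[unfolded set_integrable_def] integrable_on_powr_from_0') auto
    have "(1 + x^2/b) powr (-p) \<le> 1" for x
      using powr_mono2'[of "-p" 1 "1 + x^2/b"] b c p by simp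
    then show "norm (indicator {0<..1} x *\<^sub>R f x) \<le> norm (indicator {0<..1} x *\<^sub>R x powr c)" for x
      by (auto simp: indicator_def f_def intro!: mult_left_le_one_le)
  qed simp
  moreover have "f absolutely_integrable_on {1..}"
    unfolding set_integrable_def
  proof (rule Bochner_Integration.integrable_bound[OF _ f_measurable AE_I2])
    have "(\<lambda>x. x powr (c - 2*p)) integrable_on {1..}"
      using has_integral_powr_to_inf[of "c - 2*p" 1] p unfolding integrable_on_def by auto
    then show "integrable lebesgue (\<lambda>x. indicator {1..} x *\<^sub>R (b powr p * x powr (c - 2*p)))"
      using b by (intro integrable_mult_right nonnegative_absolutely_integrable_1[unfolded set_integrable_def]) auto
    have "f x \<le> b powr p * x powr (c - 2*p)" if "x \<ge> 1" for x
    proof -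
      have "f x \<le> b powr p / x powr (2*p) * \<bar>x\<bar> powr c"
        unfolding f_def using b c p that by (intro mult_right_mono one_plus_square_div_powr_le) auto
      then show ?thesis
        using that by (simp add: powr_diff)
    qed
    then show "norm (indicator {1..} x *\<^sub>R f x) \<le> norm (indicator {1..} x *\<^sub>R (b powr p * x powr (c - 2*p)))" for x
      by (auto simp: indicator_def f_def)
  qed simp
  ultimately have "f absolutely_integrable_on ({0<..1} \<union> {1..})"
    by (rule set_integrable_Un) auto
  also have "{0<..1} \<union> {1..} = ({0<..} :: real set)"
    by auto
  finally show ?thesis
    by (simp only: f_def[abs_def])
qed

lemma integrable_one_plus_square_powr_mult_abs_powr:
  fixes b c p :: real
  assumes "b > 0" "c > -1" "c + 1 < 2 * p"
  shows "integrable lborel (\<lambda>x. (1 + x^2/b) powr (-p) * \<bar>x\<bar> powr c)"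
proof -
  define f where "f x = (1 + x^2/b) powr (-p) * \<bar>x\<bar> powr c" for x :: real
  have "integrable lborel (\<lambda>x. indicator {0<..} x *\<^sub>R f x)"
    using one_plus_square_powr_mult_abs_powr_absolutely_integrable_on_halfline[OF assms]
    unfolding set_integrable_def f_def by (subst (asm) integrable_completion) (auto, measurable)
  moreover have "(\<lambda>x. indicator {0<..} x *\<^sub>R f x) = (\<lambda>x. indicator {0..} x *\<^sub>R f x)"
    by (auto simp: fun_eq_iff indicator_def f_def)
  ultimately have "has_bochner_integral lborel f (2 *\<^sub>R integral\<^sup>L lborel (\<lambda>x. indicator {0..} x *\<^sub>R f x))"
    by (intro has_bochner_integral_even_function has_bochner_integral_integrable) (auto simp: f_def)
  then show ?thesis
    by (simp add: has_bochner_integral_iff f_def[abs_def])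
qed

lemma sin_le_Maclaurin5:
  fixes u :: real
  assumes "u \<ge> 0"
  shows "sin u \<le> u - u^3/6 + u^5/120"
proof -
  have "sin u - (\<Sum>m<5. sin_coeff m * u ^ m) \<le> inverse (fact 5) * \<bar>u\<bar> ^ 5"
    using Maclaurin_sin_bound abs_le_D1 by blast
  moreover have "(\<Sum>m<5. sin_coeff m * u ^ m) = u - u^3/6"
    by (simp add: eval_nat_numeral sin_coeff_Suc cos_coeff_Suc)
  ultimately show ?thesis
    using assms by (simp add: fact_numeral)
qed

lemma sinc_Maclaurin_square_le_one:
  fixes v :: real
  assumes "0 \<le> v" "v \<le> 4"
  shows "(1 - v/6 + v^2/120)^2 * (1 + v/4) \<le> 1"
proof -
  have "v^2 \<le> 4 * v" "v^3 \<le> 4 * v^2"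
    using assms mult_right_mono[of v 4 v] mult_right_mono[of v 4 "v^2"]
    by (simp_all add: power2_eq_square power3_eq_cube)
  then have "0 \<le> 1 - v/6 + v^2/120" "1 - v/6 + v^2/120 \<le> 1 - 2/15 * v"
    using assms by simp_all
  then have "(1 - v/6 + v^2/120)^2 * (1 + v/4) \<le> (1 - 2/15 * v)^2 * (1 + v/4)"
    using assms by (intro mult_right_mono power_mono) auto
  also have "\<dots> = 1 - v/60 - 11 * v^2/225 + v^3/225"
    by (simp add: power2_eq_square power3_eq_cube field_simps)
  also have "\<dots> \<le> 1"
    using assms \<open>v^3 \<le> 4 * v^2\<close> zero_le_power2[of v] by linarith
  finally show ?thesis .
qed

lemma sin_square_mult_le:
  fixes u :: real
  shows "(sin u)^2 * (1 + u^2/4) \<le> u^2"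
proof -
  have "(sin u)^2 * (1 + u^2/4) \<le> u^2" if "u \<ge> 0" for u :: real
  proof (cases "u \<ge> 2")
    case True
    then have "4 \<le> u^2"
      using mult_mono[of 2 u 2 u] by (simp add: power2_eq_square)
    moreover have "(sin u)^2 * (1 + u^2/4) \<le> 1 + u^2/4"
      by (intro mult_left_le_one_le) (auto simp: abs_square_le_1)
    ultimately show ?thesis by linarith
  next
    case False
    define p where "p = 1 - u^2/6 + (u^2)^2/120"
    have "0 \<le> sin u"
      using that False pi_gt3 by (intro sin_ge_zero) auto
    moreover have "sin u \<le> u * p"
      using sin_le_Maclaurin5[OF that] by (simp add: p_def algebra_simps eval_nat_numeral)
    ultimately have "(sin u)^2 * (1 + u^2/4) \<le> (u * p)^2 * (1 + u^2/4)"
      by (intro mult_right_mono power_mono) auto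
    also have "\<dots> = u^2 * (p^2 * (1 + u^2/4))"
      by (simp add: power_mult_distrib)
    also have "\<dots> \<le> u^2"
      using False that mult_mono[of u 2 u 2] unfolding p_def
      by (intro mult_right_le_one_le sinc_Maclaurin_square_le_one) (auto simp: power2_eq_square)
    finally show ?thesis .
  qed
  from this[of u] this[of "-u"] show ?thesis
    by (cases "u \<ge> 0") auto
qed

lemma abs_sin_div_powr_le:
  fixes a u :: real
  assumes "a \<ge> 0"
  shows "(\<bar>sin u\<bar> / \<bar>u\<bar>) powr a \<le> (1 + u^2/4) powr (-(a/2))"
proof (cases "u = 0")
  case False
  have pos: "0 < 1 + u^2/4"
    by (simp add: add_pos_nonneg)
  define r where "r = \<bar>sin u\<bar> / \<bar>u\<bar>"
  have "r powr a = ((r^2) powr (1/2)) powr a"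
    by (simp add: square_powr_half r_def)
  also have "\<dots> = (r^2) powr (a/2)"
    by (subst powr_powr) simp
  also have "\<dots> \<le> (inverse (1 + u^2/4)) powr (a/2)"
    using sin_square_mult_le[of u] False pos assms
    by (intro powr_mono2) (auto simp: r_def power_divide field_simps)
  finally show ?thesis
    using pos by (simp add: r_def powr_minus inverse_powr)
qed (use assms in auto)

lemma mult_ln_one_plus_div_mono:
  fixes a b y :: real
  assumes "0 < a" "a \<le> b" "0 \<le> y"
  shows "a * ln (1 + y/a) \<le> b * ln (1 + y/b)"
proof -
  define t where "t = a / b"
  have t: "0 \<le> t" "t \<le> 1"
    using assms by (auto simp: t_def)
  have "(1 - t) * ln 1 + t * ln (1 + y/a) \<le> ln ((1 - t) *\<^sub>R 1 + t *\<^sub>R (1 + y/a))"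
    using assms by (intro concave_onD[OF ln_concave t]) (auto intro!: add_pos_nonneg)
  also have "(1 - t) *\<^sub>R 1 + t *\<^sub>R (1 + y/a) = 1 + y/b"
    using assms by (simp add: t_def field_simps)
  finally show ?thesis
    using assms by (simp add: t_def field_simps)
qed

lemma one_plus_div_powr_antimono:
  fixes a b y p :: real
  assumes "0 < a" "a \<le> b" "0 \<le> y" "0 \<le> p"
  shows "(1 + y/b) powr (-(p * b)) \<le> (1 + y/a) powr (-(p * a))"
proof -
  have "p * (a * ln (1 + y/a)) \<le> p * (b * ln (1 + y/b))"
    using assms by (intro mult_left_mono mult_ln_one_plus_div_mono) auto
  moreover have "0 < 1 + y/a" "0 < 1 + y/b"
    using assms by (auto intro!: add_pos_nonneg)
  ultimately show ?thesis
    by (simp add: powr_def)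
qed

lemma abs_sin_div_powr_le_uniform:
  fixes a a0 s :: real
  assumes "0 < a0" "a0 \<le> a"
  shows "(\<bar>sin (s / sqrt a)\<bar> / \<bar>s / sqrt a\<bar>) powr a \<le> (1 + s^2 / (4 * a0)) powr (- (a0 / 2))"
proof -
  have "(s / sqrt a)^2 / 4 = (s^2 / 4) / a"
    using assms by (simp add: power_divide)
  then have "(\<bar>sin (s / sqrt a)\<bar> / \<bar>s / sqrt a\<bar>) powr a \<le> (1 + (s^2 / 4) / a) powr (- (1/2 * a))"
    using assms abs_sin_div_powr_le[of a "s / sqrt a"] by (auto simp: mult.commute)
  also have "\<dots> \<le> (1 + (s^2 / 4) / a0) powr (- (1/2 * a0))"
    using assms by (intro one_plus_div_powr_antimono) auto
  finally show ?thesis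
    by (simp add: mult.commute)
qed

lemma abs_sin_div_powr_tendsto:
  fixes s :: real
  assumes "s \<noteq> 0" \<comment> \<open>at \<open>s = 0\<close> the quotient is \<open>0 / 0 = 0\<close>\<close>
  shows "((\<lambda>a. (\<bar>sin (s / sqrt a)\<bar> / \<bar>s / sqrt a\<bar>) powr a) \<longlongrightarrow> exp (-(s^2)/6)) at_top"
proof -
  have "((\<lambda>a. (\<bar>sin (r / sqrt a)\<bar> / \<bar>r / sqrt a\<bar>) powr a) \<longlongrightarrow> exp (-(r^2)/6)) at_top"
    if "r > 0" for r :: real
    using that by real_asymp (simp add: power2_eq_square)
  from this[of "\<bar>s\<bar>"] show ?thesis
    using assms by (cases "s \<ge> 0") auto
qed

lemma I_int_rescaled:
  fixes c \<alpha> :: real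
  assumes "\<alpha> > 0"
  shows "\<alpha> powr ((c + 1) / 2) * I_int \<alpha> (\<alpha> - c) =
    (\<integral>s. (\<bar>sin (s / sqrt \<alpha>)\<bar> / \<bar>s / sqrt \<alpha>\<bar>) powr \<alpha> * \<bar>s\<bar> powr c \<partial>lborel)"
proof -
  define k where "k = 1 / sqrt \<alpha>"
  have k: "k > 0"
    using assms by (simp add: k_def)
  have scale: "\<alpha> powr ((c + 1) / 2) * (k * k powr c) = 1"
  proof -
    have "k * k powr c = 1 / \<alpha> powr ((c + 1) / 2)"
      using assms k by (simp add: k_def powr_add[symmetric] powr_divide powr_half_sqrt[symmetric] powr_powr add_divide_distrib add.commute)
    then show ?thesis
      using assms by simp
  qed
  have integrand: "\<alpha> powr ((c + 1) / 2) * (k * (\<bar>sin (k * s)\<bar> powr \<alpha> * \<bar>k * s\<bar> powr (- (\<alpha> - c)))) =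
      (\<bar>sin (s / sqrt \<alpha>)\<bar> / \<bar>s / sqrt \<alpha>\<bar>) powr \<alpha> * \<bar>s\<bar> powr c" for s
  proof (cases "s = 0")
    case False
    then have "\<bar>k * s\<bar> powr (- (\<alpha> - c)) = k powr c * \<bar>s\<bar> powr c / \<bar>k * s\<bar> powr \<alpha>"
      using k by (simp add: powr_diff abs_mult powr_mult)
    then have regroup: "\<alpha> powr ((c + 1) / 2) * (k * (\<bar>sin (k * s)\<bar> powr \<alpha> * \<bar>k * s\<bar> powr (- (\<alpha> - c)))) =
        \<alpha> powr ((c + 1) / 2) * (k * k powr c) * ((\<bar>sin (k * s)\<bar> / \<bar>k * s\<bar>) powr \<alpha> * \<bar>s\<bar> powr c)"
      by (simp add: powr_divide)
    have "s / sqrt \<alpha> = k * s"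
      by (simp add: k_def)
    then show ?thesis
      unfolding regroup scale by simp
  qed simp
  have "I_int \<alpha> (\<alpha> - c) = k * (\<integral>s. \<bar>sin (k * s)\<bar> powr \<alpha> * \<bar>k * s\<bar> powr (- (\<alpha> - c)) \<partial>lborel)"
    unfolding I_int_def
    using lborel_integral_real_affine[of k "\<lambda>t. \<bar>sin t\<bar> powr \<alpha> * \<bar>t\<bar> powr (- (\<alpha> - c))" 0] k by simp
  then show ?thesis
    unfolding integrand[symmetric] by (simp only: integral_mult_right_zero)
qed

lemma I_int_rescaled_tendsto:
  fixes c :: real
  assumes c: "c > -1"
  shows "((\<lambda>\<alpha>. \<alpha> powr ((c + 1) / 2) * I_int \<alpha> (\<alpha> - c))
           \<longlongrightarrow> 6 powr ((c + 1) / 2) * Gamma ((c + 1) / 2)) at_top"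
proof -
  define G where "G a s = (\<bar>sin (s / sqrt a)\<bar> / \<bar>s / sqrt a\<bar>) powr a * \<bar>s\<bar> powr c" for a s :: real
  define w where "w s = (1 + s^2 / (4 * (c + 3))) powr (- ((c + 3) / 2)) * \<bar>s\<bar> powr c" for s :: real
  have "((\<lambda>a. integral\<^sup>L lborel (G a)) \<longlongrightarrow> (\<integral>s. exp (-(s^2)/6) * \<bar>s\<bar> powr c \<partial>lborel)) at_top"
  proof (rule integral_dominated_convergence_at_top[where w = w])
    show "integrable lborel w"
      unfolding w_def using c by (intro integrable_one_plus_square_powr_mult_abs_powr) auto
    show "AE s in lborel. ((\<lambda>a. G a s) \<longlongrightarrow> exp (-(s^2)/6) * \<bar>s\<bar> powr c) at_top"
    proof (rule AE_I2)
      fix s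
      show "((\<lambda>a. G a s) \<longlongrightarrow> exp (-(s^2)/6) * \<bar>s\<bar> powr c) at_top"
      proof (cases "s = 0")
        case False
        then show ?thesis
          unfolding G_def by (intro tendsto_mult_right abs_sin_div_powr_tendsto)
      qed (simp add: G_def)
    qed
    have "AE s in lborel. norm (G a s) \<le> w s" if "a \<ge> c + 3" for a
    proof (rule AE_I2)
      fix s
      have "G a s \<le> w s"
        unfolding G_def w_def using that c by (intro mult_right_mono abs_sin_div_powr_le_uniform) auto
      then show "norm (G a s) \<le> w s"
        by (simp add: G_def)
    qed
    then show "\<forall>\<^sub>F a in at_top. AE s in lborel. norm (G a s) \<le> w s"
      using eventually_ge_at_top[of "c + 3"] by (rule eventually_mono[rotated])
    show "(\<lambda>s. exp (-(s^2)/6) * \<bar>s\<bar> powr c) \<in> borel_measurable lborel"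
      by measurable
    show "G a \<in> borel_measurable lborel" for a
      unfolding G_def by measurable
  qed
  moreover have "\<forall>\<^sub>F a in at_top. integral\<^sup>L lborel (G a) = a powr ((c + 1) / 2) * I_int a (a - c)"
    using eventually_gt_at_top[of 0] by eventually_elim (unfold G_def, rule I_int_rescaled[symmetric])
  moreover have "(\<integral>s. exp (-(s^2)/6) * \<bar>s\<bar> powr c \<partial>lborel) = 6 powr ((c + 1) / 2) * Gamma ((c + 1) / 2)"
    using c by (intro has_bochner_integral_integral_eq has_bochner_integral_gaussian_abs_powr) auto
  ultimately show ?thesis
    by (simp only: tendsto_cong)
qed

theorem mainTheorem5:
  fixes c :: real
  assumes "c > -1"
  shows "((\<lambda>\<alpha>. \<alpha> powr ((c + 1) / 2) * I_int \<alpha> (\<alpha> - c))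
           \<longlongrightarrow> 6 powr ((c + 1) / 2) * Gamma ((c + 1) / 2)) at_top
       \<and> ((\<lambda>\<alpha>. sqrt \<alpha> * I_int \<alpha> \<alpha>) \<longlongrightarrow> sqrt (6 * pi)) at_top"
proof
  show "((\<lambda>\<alpha>. \<alpha> powr ((c + 1) / 2) * I_int \<alpha> (\<alpha> - c))
          \<longlongrightarrow> 6 powr ((c + 1) / 2) * Gamma ((c + 1) / 2)) at_top"
    using assms by (rule I_int_rescaled_tendsto)
  have "((\<lambda>\<alpha>. \<alpha> powr ((0 + 1) / 2) * I_int \<alpha> (\<alpha> - 0))
          \<longlongrightarrow> 6 powr ((0 + 1) / 2) * Gamma ((0 + 1) / 2)) at_top"
    by (rule I_int_rescaled_tendsto) simp
  moreover have "\<forall>\<^sub>F \<alpha> in at_top. \<alpha> powr ((0 + 1) / 2) * I_int \<alpha> (\<alpha> - 0) = sqrt \<alpha> * I_int \<alpha> \<alpha>"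
    using eventually_ge_at_top[of 0] by eventually_elim (simp add: powr_half_sqrt)
  moreover have "6 powr ((0 + 1) / 2) * Gamma ((0 + 1) / 2) = sqrt (6 * pi)"
    by (simp add: Gamma_one_half_real powr_half_sqrt real_sqrt_mult)
  ultimately show "((\<lambda>\<alpha>. sqrt \<alpha> * I_int \<alpha> \<alpha>) \<longlongrightarrow> sqrt (6 * pi)) at_top"
    by (simp only: tendsto_cong)
qed

end
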